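(* Let $\mathcal{T}$ be a locally compact, $\sigma$-compact Hausdorff space, $\mu$ a finite positive Radon measure on $\mathcal{T}$ with $\mu(\mathcal{T})>0$, $1\le p<\infty$ with conjugate $q$, and $\varepsilon>1$. Let $S_\varepsilon^p=\{f\in L^q_\mu(\mathcal{T})\text{ real}:\|f\|_q\le\varepsilon,\ \int f\,d\mu=\mu(\mathcal{T})^{1/p}\}$ and $L^p(\mathcal{T})_\varepsilon^+=\{g\in L^p_\mu(\mathcal{T})\text{ real}:\int gf\,d\mu\ge0\ \forall f\in S_\varepsilon^p\}$. Then $L^p(\mathcal{T})_+\subseteq L^p(\mathcal{T})_\varepsilon^+$ if and only if $S_\varepsilon^p\subseteq L^q(\mathcal{T})_+$, where $L^s(\mathcal{T})_+$ denotes the $\mu$-a.e. nonnegative functions in $L^s_\mu(\mathcal{T})$. *)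

theory Defs
  imports "HOL-Analysis.Analysis" "HOL-Probability.Essential_Supremum"
begin

text \<open>Topological hypotheses on the ambient type (the space T is UNIV).\<close>
definition sigma_compact_UNIV :: "'a::topological_space itself \<Rightarrow> bool" where
  "sigma_compact_UNIV _ \<longleftrightarrow>
     (\<exists>K :: nat \<Rightarrow> 'a set. (\<forall>n. compact (K n)) \<and> (\<Union>n. K n) = UNIV)"

text \<open>Radon measure (Folland): Borel measure, finite on compacts, outer regular on
  Borel sets, inner regular (by compacts) on open sets.\<close>
definition radon_measure :: "'a::topological_space measure \<Rightarrow> bool" where
  "radon_measure M \<longleftrightarrow>
     sets M = sets borel \<and>
     (\<forall>K. compact K \<longrightarrow> emeasure M K < \<infinity>) \<and>
     (\<forall>A\<in>sets borel. emeasure M A = (INF U\<in>{U. open U \<and> A \<subseteq> U}. emeasure M U)) \<and>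
     (\<forall>U. open U \<longrightarrow> emeasure M U = (SUP K\<in>{K. compact K \<and> K \<subseteq> U}. emeasure M K))"

definition conj_exp :: "real \<Rightarrow> ereal" where
  "conj_exp p = (if p = 1 then \<infinity> else ereal (p / (p - 1)))"

definition Lnorm :: "'a measure \<Rightarrow> ereal \<Rightarrow> ('a \<Rightarrow> real) \<Rightarrow> ereal" where
  "Lnorm M r f =
     (if r = \<infinity> then esssup M (\<lambda>x. ereal \<bar>f x\<bar>)
      else ereal ((\<integral>x. \<bar>f x\<bar> powr real_of_ereal r \<partial>M) powr (1 / real_of_ereal r)))"

definition memL :: "'a measure \<Rightarrow> ereal \<Rightarrow> ('a \<Rightarrow> real) \<Rightarrow> bool" where
  "memL M r f \<longleftrightarrow> f \<in> borel_measurable M \<and>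
     (if r = \<infinity> then esssup M (\<lambda>x. ereal \<bar>f x\<bar>) < \<infinity>
      else integrable M (\<lambda>x. \<bar>f x\<bar> powr real_of_ereal r))"

definition S_eps :: "'a measure \<Rightarrow> real \<Rightarrow> real \<Rightarrow> ('a \<Rightarrow> real) set" where
  "S_eps M p \<epsilon> = {f. memL M (conj_exp p) f \<and> Lnorm M (conj_exp p) f \<le> ereal \<epsilon> \<and>
       (\<integral>x. f x \<partial>M) = measure M (space M) powr (1 / p)}"

definition Lp_eps_pos :: "'a measure \<Rightarrow> real \<Rightarrow> real \<Rightarrow> ('a \<Rightarrow> real) set" where
  "Lp_eps_pos M p \<epsilon> = {g. memL M (ereal p) g \<and>
       (\<forall>f\<in>S_eps M p \<epsilon>. (\<integral>x. g x * f x \<partial>M) \<ge> 0)}"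

definition L_pos :: "'a measure \<Rightarrow> ereal \<Rightarrow> ('a \<Rightarrow> real) set" where
  "L_pos M r = {g. memL M r g \<and> (AE x in M. g x \<ge> 0)}"

end

theory Submission
  imports Defs
begin

text \<open>If some \<open>f \<in> S\<^sub>\<epsilon>\<^sup>p\<close> were negative on a set of positive measure, it would be
  negative and bounded below on some set \<open>B\<close> of positive measure; the indicator of \<open>B\<close>
  lies in \<open>L\<^sup>p\<^sub>+\<close>, yet pairs with \<open>f\<close> to a negative integral. The converse inclusion
  is immediate, since the product of two a.e. nonnegative functions has nonnegative
  integral.\<close>

lemma not_AE_nonneg_obtains_bounded_negative_set:
  assumes f: "f \<in> borel_measurable M" and not_nonneg: "\<not> (AE x in M. 0 \<le> (f x :: real))"
  obtains n :: nat where "emeasure M {x\<in>space M. - real n \<le> f x \<and> f x < 0} \<noteq> 0"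
proof (rule ccontr)
  define B where "B n = {x\<in>space M. - real n \<le> f x \<and> f x < 0}" for n :: nat
  assume "\<not> thesis"
  with that have "B n \<in> null_sets M" for n
    unfolding B_def null_sets_def using f by auto
  then have "(\<Union>n. B n) \<in> null_sets M"
    by (rule null_sets_UN)
  moreover have "{x\<in>space M. \<not> 0 \<le> f x} \<subseteq> (\<Union>n. B n)"
  proof
    fix x assume x: "x \<in> {x\<in>space M. \<not> 0 \<le> f x}"
    obtain n :: nat where "- f x \<le> real n"
      using real_arch_simple by blast
    with x have "x \<in> B n"
      unfolding B_def by auto
    then show "x \<in> (\<Union>n. B n)" by blast
  qed
  ultimately have "AE x in M. 0 \<le> f x"
    by (rule AE_I')
  with not_nonneg show False ..
qed

lemma AE_nonneg_if_indicator_integrals_nonneg: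
  assumes "finite_measure M" and f: "f \<in> borel_measurable M"
    and nonneg: "\<And>A. A \<in> sets M \<Longrightarrow> 0 \<le> (\<integral>x. indicator A x * f x \<partial>M)"
  shows "AE x in M. 0 \<le> (f x :: real)"
proof (rule ccontr)
  interpret finite_measure M by fact
  assume "\<not> (AE x in M. 0 \<le> f x)"
  with f obtain n :: nat where pos: "emeasure M {x\<in>space M. - real n \<le> f x \<and> f x < 0} \<noteq> 0"
    (is "emeasure M ?B \<noteq> 0")
    by (rule not_AE_nonneg_obtains_bounded_negative_set)
  have B: "?B \<in> sets M"
    using f by measurable
  have "(\<integral>x. indicator ?B x * f x \<partial>M) < (\<integral>x. 0 \<partial>M)"
  proof (rule integral_less_AE[OF _ _ pos B])
    show "integrable M (\<lambda>x. indicator ?B x * f x)"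
      by (rule integrable_const_bound[where B = "real n"])
        (use f B in \<open>auto simp: indicator_def\<close>)
  qed (auto simp: indicator_def)
  with nonneg[OF B] show False
    by simp
qed

lemma memL_indicator:
  assumes "finite_measure M" and "A \<in> sets M" and "0 < p"
  shows "memL M (ereal p) (indicator A)"
proof -
  interpret finite_measure M by fact
  have "(\<lambda>x. \<bar>indicator A x :: real\<bar> powr p) = indicator A"
    using \<open>0 < p\<close> by (auto simp: indicator_def)
  moreover have "integrable M (indicator A :: _ \<Rightarrow> real)"
    using \<open>A \<in> sets M\<close> by (simp add: less_top[symmetric])
  ultimately show ?thesis
    using \<open>A \<in> sets M\<close> by (simp add: memL_def)
qed

theorem lemma5p3:
  fixes M :: "('a::t2_space) measure" and p \<epsilon> :: real
  assumes "locally_compact_space (euclidean :: 'a topology)"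
    and "sigma_compact_UNIV TYPE('a)"
    and "radon_measure M"
    and "finite_measure M"
    and "emeasure M (space M) > 0"
    and "1 \<le> p"
    and "\<epsilon> > 1"
  shows "L_pos M (ereal p) \<subseteq> Lp_eps_pos M p \<epsilon> \<longleftrightarrow> S_eps M p \<epsilon> \<subseteq> L_pos M (conj_exp p)"
proof
  assume cone: "L_pos M (ereal p) \<subseteq> Lp_eps_pos M p \<epsilon>"
  show "S_eps M p \<epsilon> \<subseteq> L_pos M (conj_exp p)"
  proof
    fix f assume f: "f \<in> S_eps M p \<epsilon>"
    have "indicator A \<in> L_pos M (ereal p)" if "A \<in> sets M" for A
      using memL_indicator[OF \<open>finite_measure M\<close> that] \<open>1 \<le> p\<close> by (simp add: L_pos_def)
    with cone f have "0 \<le> (\<integral>x. indicator A x * f x \<partial>M)" if "A \<in> sets M" for A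
      using that by (auto simp: Lp_eps_pos_def)
    with f \<open>finite_measure M\<close> show "f \<in> L_pos M (conj_exp p)"
      by (auto simp: S_eps_def L_pos_def memL_def intro: AE_nonneg_if_indicator_integrals_nonneg)
  qed
next
  assume "S_eps M p \<epsilon> \<subseteq> L_pos M (conj_exp p)"
  then have "0 \<le> (\<integral>x. g x * f x \<partial>M)" if "g \<in> L_pos M (ereal p)" "f \<in> S_eps M p \<epsilon>" for f g
    using that by (auto simp: L_pos_def intro!: integral_nonneg_AE elim!: AE_mp)
  then show "L_pos M (ereal p) \<subseteq> Lp_eps_pos M p \<epsilon>"
    by (auto simp: Lp_eps_pos_def L_pos_def)
qed

end
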